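(* Let $(V,d)$ be a finite metric space with root $r\in V$ and let $\pi$ be any master tour on $(V,d)$. Let $\{q_v\}_{v\in V}$ and $\{\bar p_v\}_{v\in V}$ be probabilities with $0\le q_v\le\bar p_v\le 1$ for each $v\in V$. Then the expected latency of $\pi$ when each vertex $v$ is independently active with probability $q_v$ is at most the expected latency of $\pi$ when each vertex $v$ is independently active with probability $\bar p_v$.
   Context: A master tour $\pi$ is a tour starting at the root $r$ visiting all vertices of $V$. For an active set $A\subseteq V$, $\pi_A$ visits the vertices of $A$ starting from $r$ in the order of $\pi$ (shortcutting inactive vertices); the latency of $v\in A$ is the length of the path from $r$ to $v$ along $\pi_A$. The expected latency of $\pi$ under probabilities $\{x_v\}$ is $\mathbb{E}_A[\sum_{v\in A}(\text{latency of }v\text{ in }\pi_A)]$ where $A$ contains each $v$ independently with probability $x_v$. *)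

theory Defs
  imports Main "HOL-Library.FuncSet" Complex_Main
begin

definition finite_metric_space :: "'a set \<Rightarrow> ('a \<Rightarrow> 'a \<Rightarrow> real) \<Rightarrow> bool" where
  "finite_metric_space V d \<longleftrightarrow> finite V \<and>
     (\<forall>u\<in>V. \<forall>v\<in>V. d u v \<ge> 0) \<and>
     (\<forall>u\<in>V. \<forall>v\<in>V. d u v = 0 \<longleftrightarrow> u = v) \<and>
     (\<forall>u\<in>V. \<forall>v\<in>V. d u v = d v u) \<and>
     (\<forall>u\<in>V. \<forall>v\<in>V. \<forall>w\<in>V. d u w \<le> d u v + d v w)"

definition master_tour :: "'a set \<Rightarrow> 'a \<Rightarrow> 'a list \<Rightarrow> bool" where
  "master_tour V r \<pi> \<longleftrightarrow> distinct \<pi> \<and> set \<pi> = V \<and> \<pi> \<noteq> [] \<and> hd \<pi> = r"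

definition path_len :: "('a \<Rightarrow> 'a \<Rightarrow> real) \<Rightarrow> 'a list \<Rightarrow> real" where
  "path_len d xs = (\<Sum>(u, v)\<leftarrow>zip xs (tl xs). d u v)"

definition shortcut_tour :: "'a list \<Rightarrow> 'a set \<Rightarrow> 'a list" where
  "shortcut_tour \<pi> A = hd \<pi> # filter (\<lambda>u. u \<in> A) (tl \<pi>)"

definition latency :: "('a \<Rightarrow> 'a \<Rightarrow> real) \<Rightarrow> 'a list \<Rightarrow> 'a set \<Rightarrow> 'a \<Rightarrow> real" where
  "latency d \<pi> A v = path_len d (takeWhile (\<lambda>u. u \<noteq> v) (shortcut_tour \<pi> A) @ [v])"

definition total_latency :: "('a \<Rightarrow> 'a \<Rightarrow> real) \<Rightarrow> 'a list \<Rightarrow> 'a set \<Rightarrow> real" where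
  "total_latency d \<pi> A = (\<Sum>v\<in>A. latency d \<pi> A v)"

definition set_prob :: "'a set \<Rightarrow> ('a \<Rightarrow> real) \<Rightarrow> 'a set \<Rightarrow> real" where
  "set_prob V x A = (\<Prod>v\<in>A. x v) * (\<Prod>v\<in>V - A. 1 - x v)"

definition expected_latency :: "'a set \<Rightarrow> ('a \<Rightarrow> 'a \<Rightarrow> real) \<Rightarrow> 'a list \<Rightarrow> ('a \<Rightarrow> real) \<Rightarrow> real" where
  "expected_latency V d \<pi> x = (\<Sum>A\<in>Pow V. set_prob V x A * total_latency d \<pi> A)"

end

theory Submission
  imports Defs
begin

text \<open>Two independent monotonicity facts combine. Deterministically, enlarging the
  active set never decreases the total latency: each previously active vertex is now
  reached along a tour visiting more intermediate vertices, which by the triangle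
  inequality is no shorter, and the new vertices contribute nonnegative latencies.
  Probabilistically, the expectation of a monotone set function under independent
  activation is monotone in each activation probability: conditioning on the status
  of one vertex w writes it as an affine function of the probability of w, with
  nonnegative slope by monotonicity; induction on the ground set finishes.\<close>

lemma path_len_Nil [simp]: "path_len d [] = 0"
  by (simp add: path_len_def)

lemma path_len_singleton [simp]: "path_len d [a] = 0"
  by (simp add: path_len_def)

lemma path_len_Cons_Cons [simp]: "path_len d (a # b # ys) = d a b + path_len d (b # ys)"
  by (simp add: path_len_def)

lemma path_len_nonneg:
  assumes "\<forall>u\<in>V. \<forall>v\<in>V. d u v \<ge> 0" and "set xs \<subseteq> V"
  shows "path_len d xs \<ge> 0"
  using assms(2)
proof (induction xs rule: induct_list012)
  case (3 x y zs)
  then show ?case using assms(1) by simp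
qed auto

lemma path_len_Cons_le_detour:
  assumes "\<forall>u\<in>V. \<forall>v\<in>V. \<forall>w\<in>V. d u w \<le> d u v + d v w"
    and "a \<in> V" and "x \<in> V" and "set ys \<subseteq> V" and "ys \<noteq> []"
  shows "path_len d (a # ys) \<le> d a x + path_len d (x # ys)"
proof -
  obtain y ys' where ys: "ys = y # ys'"
    using assms(5) by (cases ys) auto
  have "d a y \<le> d a x + d x y"
    using assms ys by auto
  then show ?thesis using ys by simp
qed

lemma path_len_filter_le:
  assumes tri: "\<forall>u\<in>V. \<forall>v\<in>V. \<forall>w\<in>V. d u w \<le> d u v + d v w"
    and "set (a # xs @ [b]) \<subseteq> V"
  shows "path_len d (a # filter P xs @ [b]) \<le> path_len d (a # xs @ [b])"
  using assms(2)
proof (induction xs arbitrary: a)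
  case (Cons x xs)
  then have IH: "path_len d (c # filter P xs @ [b]) \<le> path_len d (c # xs @ [b])"
    if "c \<in> V" for c
    using that by simp
  show ?case
  proof (cases "P x")
    case True
    then show ?thesis using IH[of x] Cons.prems by (cases "filter P xs @ [b]") auto
  next
    case False
    have "path_len d (a # filter P xs @ [b]) \<le> path_len d (a # xs @ [b])"
      using IH[of a] Cons.prems by simp
    also have "\<dots> \<le> d a x + path_len d (x # xs @ [b])"
      using path_len_Cons_le_detour[OF tri, of a x "xs @ [b]"] Cons.prems by simp
    finally show ?thesis using False by (cases "xs @ [b]") auto
  qed
qed simp

lemma takeWhile_neq_filter:
  "P v \<Longrightarrow> takeWhile (\<lambda>u. u \<noteq> v) (filter P xs) = filter P (takeWhile (\<lambda>u. u \<noteq> v) xs)"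
  by (induction xs) auto

lemma latency_nonneg:
  assumes "\<forall>u\<in>V. \<forall>v\<in>V. d u v \<ge> 0" and "set \<pi> \<subseteq> V" and "\<pi> \<noteq> []" and "v \<in> V"
  shows "latency d \<pi> A v \<ge> 0"
proof -
  have "set (takeWhile (\<lambda>u. u \<noteq> v) (shortcut_tour \<pi> A) @ [v]) \<subseteq> V"
    using assms(2-4) set_takeWhileD list.set_sel(2)[of \<pi>]
    by (fastforce simp: shortcut_tour_def)
  then show ?thesis
    unfolding latency_def using path_len_nonneg[OF assms(1)] by blast
qed

lemma latency_mono:
  assumes tri: "\<forall>u\<in>V. \<forall>v\<in>V. \<forall>w\<in>V. d u w \<le> d u v + d v w"
    and \<pi>V: "set \<pi> \<subseteq> V" and "\<pi> \<noteq> []" and "v \<in> V" and "v \<in> A" and "A \<subseteq> B"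
  shows "latency d \<pi> A v \<le> latency d \<pi> B v"
proof (cases "hd \<pi> = v")
  case True
  then show ?thesis by (simp add: latency_def shortcut_tour_def)
next
  case False
  define ys where "ys = takeWhile (\<lambda>u. u \<noteq> v) (tl \<pi>)"
  have latency_eq: "latency d \<pi> C v = path_len d (hd \<pi> # filter (\<lambda>u. u \<in> C) ys @ [v])"
    if "v \<in> C" for C
    using False that by (simp add: latency_def shortcut_tour_def ys_def takeWhile_neq_filter)
  have "filter (\<lambda>u. u \<in> A) ys = filter (\<lambda>u. u \<in> A) (filter (\<lambda>u. u \<in> B) ys)"
    using \<open>A \<subseteq> B\<close> by (auto intro: filter_cong)
  moreover have "set (hd \<pi> # filter (\<lambda>u. u \<in> B) ys @ [v]) \<subseteq> V"
    using \<pi>V \<open>\<pi> \<noteq> []\<close> \<open>v \<in> V\<close> list.set_sel(2)[of \<pi>]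
    by (auto simp: ys_def dest: set_takeWhileD)
  ultimately show ?thesis
    using latency_eq[OF \<open>v \<in> A\<close>] latency_eq[of B] assms(5,6)
      path_len_filter_le[OF tri, of "hd \<pi>" "filter (\<lambda>u. u \<in> B) ys" v "\<lambda>u. u \<in> A"]
    by auto
qed

lemma total_latency_mono:
  assumes "finite_metric_space V d" and "set \<pi> \<subseteq> V" and "\<pi> \<noteq> []"
    and "A \<subseteq> B" and "B \<subseteq> V"
  shows "total_latency d \<pi> A \<le> total_latency d \<pi> B"
proof -
  have nonneg: "\<forall>u\<in>V. \<forall>v\<in>V. d u v \<ge> 0"
    and tri: "\<forall>u\<in>V. \<forall>v\<in>V. \<forall>w\<in>V. d u w \<le> d u v + d v w"
    and "finite B"
    using assms(1,5) finite_subset unfolding finite_metric_space_def by auto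
  have "total_latency d \<pi> A \<le> (\<Sum>v\<in>A. latency d \<pi> B v)"
    unfolding total_latency_def
    using latency_mono[OF tri assms(2,3)] assms(4,5) by (intro sum_mono) auto
  also have "\<dots> \<le> (\<Sum>v\<in>B. latency d \<pi> B v)"
    using latency_nonneg[OF nonneg assms(2,3)] assms(5)
    by (intro sum_mono2[OF \<open>finite B\<close> assms(4)]) auto
  finally show ?thesis unfolding total_latency_def .
qed

lemma set_prob_insert_out:
  assumes "finite W" and "w \<notin> W" and "A \<subseteq> W"
  shows "set_prob (insert w W) x A = (1 - x w) * set_prob W x A"
proof -
  have "insert w W - A = insert w (W - A)"
    using assms by auto
  then show ?thesis unfolding set_prob_def using assms by simp
qed

lemma set_prob_insert_in:
  assumes "finite W" and "w \<notin> W" and "A \<subseteq> W"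
  shows "set_prob (insert w W) x (insert w A) = x w * set_prob W x A"
proof -
  have "insert w W - insert w A = W - A" and "finite A" and "w \<notin> A"
    using assms finite_subset by auto
  then show ?thesis unfolding set_prob_def by simp
qed

lemma set_prob_nonneg:
  assumes "\<forall>v\<in>V. 0 \<le> x v \<and> x v \<le> 1" and "A \<subseteq> V"
  shows "set_prob V x A \<ge> 0"
  unfolding set_prob_def using assms
  by (intro mult_nonneg_nonneg prod_nonneg) auto

lemma sum_Pow_insert_set_prob:
  assumes "finite W" and "w \<notin> W"
  shows "(\<Sum>A\<in>Pow (insert w W). set_prob (insert w W) x A * f A)
       = (\<Sum>A\<in>Pow W. set_prob W x A * ((1 - x w) * f A + x w * f (insert w A)))"
proof -
  have "inj_on (insert w) (Pow W)"
    using assms(2) by (intro inj_onI) (metis PowD insert_ident subset_iff)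
  then have "(\<Sum>A\<in>insert w ` Pow W. set_prob (insert w W) x A * f A)
      = (\<Sum>A\<in>Pow W. x w * set_prob W x A * f (insert w A))"
    by (simp add: sum.reindex set_prob_insert_in[OF assms])
  moreover have "(\<Sum>A\<in>Pow W. set_prob (insert w W) x A * f A)
      = (\<Sum>A\<in>Pow W. (1 - x w) * set_prob W x A * f A)"
    by (simp add: set_prob_insert_out[OF assms])
  moreover have "(\<Sum>A\<in>Pow (insert w W). set_prob (insert w W) x A * f A)
      = (\<Sum>A\<in>Pow W. set_prob (insert w W) x A * f A)
        + (\<Sum>A\<in>insert w ` Pow W. set_prob (insert w W) x A * f A)"
    unfolding Pow_insert using assms by (intro sum.union_disjoint) auto
  ultimately show ?thesis
    by (simp add: sum.distrib[symmetric] algebra_simps)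
qed

lemma expectation_set_prob_mono:
  assumes "finite V" and "\<forall>v\<in>V. 0 \<le> q v \<and> q v \<le> p v \<and> p v \<le> 1"
    and "\<And>A B. A \<subseteq> B \<Longrightarrow> B \<subseteq> V \<Longrightarrow> f A \<le> f B"
  shows "(\<Sum>A\<in>Pow V. set_prob V q A * f A) \<le> (\<Sum>A\<in>Pow V. set_prob V p A * f A)"
  using assms
proof (induction V arbitrary: f rule: finite_induct)
  case empty
  then show ?case by (simp add: set_prob_def)
next
  case (insert w W)
  define g where "g t A = (1 - t) * f A + t * f (insert w A)" for t A
  have probs: "0 \<le> q w" "q w \<le> p w" "p w \<le> 1" "\<forall>v\<in>W. 0 \<le> q v \<and> q v \<le> p v \<and> p v \<le> 1"
    using insert.prems(1) by auto
  have g_mono_prob: "g (q w) A \<le> g (p w) A" if "A \<subseteq> W" for A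
  proof -
    have "f A \<le> f (insert w A)"
      using insert.prems(2)[of A "insert w A"] that by auto
    then have "q w * (f (insert w A) - f A) \<le> p w * (f (insert w A) - f A)"
      using probs by (intro mult_right_mono) auto
    then show ?thesis unfolding g_def by (simp add: algebra_simps)
  qed
  have g_mono_set: "g (p w) A \<le> g (p w) B" if "A \<subseteq> B" "B \<subseteq> W" for A B
  proof -
    have "f A \<le> f B" "f (insert w A) \<le> f (insert w B)"
      using insert.prems(2)[of A B] insert.prems(2)[of "insert w A" "insert w B"] that by auto
    then show ?thesis
      unfolding g_def using probs by (intro add_mono mult_left_mono) auto
  qed
  have "(\<Sum>A\<in>Pow (insert w W). set_prob (insert w W) q A * f A)
     = (\<Sum>A\<in>Pow W. set_prob W q A * g (q w) A)"
    unfolding g_def using sum_Pow_insert_set_prob[OF insert.hyps] .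
  also have "\<dots> \<le> (\<Sum>A\<in>Pow W. set_prob W q A * g (p w) A)"
    using g_mono_prob set_prob_nonneg[of W q] probs
    by (intro sum_mono mult_left_mono) force+
  also have "\<dots> \<le> (\<Sum>A\<in>Pow W. set_prob W p A * g (p w) A)"
    using insert.IH[OF probs(4) g_mono_set] .
  also have "\<dots> = (\<Sum>A\<in>Pow (insert w W). set_prob (insert w W) p A * f A)"
    unfolding g_def using sum_Pow_insert_set_prob[OF insert.hyps] by simp
  finally show ?case .
qed

theorem lemma2:
  fixes V :: "'a set" and d :: "'a \<Rightarrow> 'a \<Rightarrow> real" and r :: 'a and \<pi> :: "'a list"
    and q p :: "'a \<Rightarrow> real"
  assumes "finite_metric_space V d" and "r \<in> V" and "master_tour V r \<pi>"
    and "\<And>v. v \<in> V \<Longrightarrow> 0 \<le> q v \<and> q v \<le> p v \<and> p v \<le> 1"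
  shows "expected_latency V d \<pi> q \<le> expected_latency V d \<pi> p"
proof -
  have "finite V" and "set \<pi> \<subseteq> V" and "\<pi> \<noteq> []"
    using assms(1,3) unfolding finite_metric_space_def master_tour_def by auto
  then show ?thesis
    unfolding expected_latency_def using assms(4)
    by (intro expectation_set_prob_mono total_latency_mono[OF assms(1)]) auto
qed

end
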